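(* Let $\alpha$ be a regular cardinal, let $e_X:P\to X$ be an $\alpha$-supported meet-extension, let $Q$ be a poset and $f:P\to Q$ an order-preserving map. Define a partial map $f_X:X\to Q$ by $f_X(x)=\bigwedge f[e_X^{-1}(x^\uparrow)]$ when this meet exists in $Q$, and undefined otherwise; let $\mathrm{dom}(f_X)$ be its domain, with the order inherited from $X$. Then: (1) $f_X$ is order-preserving, $e_X[P]\subseteq\mathrm{dom}(f_X)$, and $f_X\circ e_X=f$. (2) Suppose $f$ is $(\alpha,e_X)$-continuous. Then: (a) if $Z\subseteq\mathrm{dom}(f_X)$ with $|Z|<\alpha$, $\bigwedge Z$ exists in $X$, and $Z$ has a greatest lower bound $b$ in $\mathrm{dom}(f_X)$, then $b=\bigwedge Z$; (b) $f_X$ is $\alpha$-meet-preserving on $\mathrm{dom}(f_X)$, i.e. whenever $Z\subseteq\mathrm{dom}(f_X)$ with $|Z|<\alpha$ has a greatest lower bound $b$ in $\mathrm{dom}(f_X)$, then $f_X(b)=\bigwedge f_X[Z]$ in $Q$; (c) if $g:X\to Q$ is a partial map whose domain contains $e_X[P]$, which is $\alpha$-meet-preserving on its domain (i.e. whenever $Z\subseteq\mathrm{dom}(g)$, $|Z|<\alpha$, has a greatest lower bound $b$ in $\mathrm{dom}(g)$, then $g(b)=\bigwedge g[Z]$), and which satisfies $g\circ e_X=f$, then $g(x)=f_X(x)$ for all $x\in\mathrm{dom}(f_X)\cap\mathrm{dom}(g)$.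
   Context: For $q$ in a poset, $q^\uparrow=\{q'\ge q\}$; for $S\subseteq P$, $S^\uparrow=\{p:p\ge s\text{ for some }s\in S\}$; $e^{-1}(Z)=\{p:e(p)\in Z\}$. A meet-extension is an order-embedding $e:P\to X$ with $x=\bigwedge e[e^{-1}(x^\uparrow)]$ for all $x\in X$. It is $\alpha$-supported if for every $x\in X$ there is $S\subseteq P$ with $|S|<\alpha$ and $x=\bigwedge e_X[S]$. An order-preserving $f:P\to Q$ is $(\alpha,e_X)$-continuous if for all $q\in Q$ and all $S\subseteq f^{-1}(q^\uparrow)$ with $|S|<\alpha$ there are $q_S\in Q$, $x_S\in X$ with $\bigwedge f[S]=q_S=\bigwedge f[e_X^{-1}(x_S^\uparrow)]$ and $S^\uparrow\subseteq e_X^{-1}(x_S^\uparrow)$. *)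

theory Defs
  imports Main
begin

definition is_meet_in :: "'a::order set \<Rightarrow> 'a set \<Rightarrow> 'a \<Rightarrow> bool" where
  "is_meet_in S A m \<longleftrightarrow> m \<in> A \<and> (\<forall>s\<in>S. m \<le> s) \<and>
     (\<forall>l\<in>A. (\<forall>s\<in>S. l \<le> s) \<longrightarrow> l \<le> m)"

abbreviation is_meet :: "'a::order set \<Rightarrow> 'a \<Rightarrow> bool" where
  "is_meet S m \<equiv> is_meet_in S UNIV m"

definition up_set :: "'a::order set \<Rightarrow> 'a set" where
  "up_set S = {p. \<exists>s\<in>S. s \<le> p}"

definition order_embedding :: "('a::order \<Rightarrow> 'b::order) \<Rightarrow> bool" where
  "order_embedding e \<longleftrightarrow> (\<forall>x y. x \<le> y \<longleftrightarrow> e x \<le> e y)"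

definition meet_extension :: "('p::order \<Rightarrow> 'x::order) \<Rightarrow> bool" where
  "meet_extension e \<longleftrightarrow> order_embedding e \<and>
     (\<forall>x. is_meet (e ` (e -` {x..})) x)"

text \<open>alpha is given as a cardinal (well-order relation) r; |S| < alpha is ordLess2 (card_of S) r.\<close>
definition supported :: "'c rel \<Rightarrow> ('p::order \<Rightarrow> 'x::order) \<Rightarrow> bool" where
  "supported r e \<longleftrightarrow> (\<forall>x. \<exists>S. ordLess2 (card_of S) r \<and> is_meet (e ` S) x)"

definition continuous_wrt :: "'c rel \<Rightarrow> ('p::order \<Rightarrow> 'x::order) \<Rightarrow> ('p \<Rightarrow> 'q::order) \<Rightarrow> bool" where
  "continuous_wrt r e f \<longleftrightarrow> (\<forall>q S. S \<subseteq> f -` {q..} \<and> ordLess2 (card_of S) r \<longrightarrow>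
     (\<exists>qS xS. is_meet (f ` S) qS \<and> is_meet (f ` (e -` {xS..})) qS \<and>
              up_set S \<subseteq> e -` {xS..}))"

definition ext_map :: "('p::order \<Rightarrow> 'x::order) \<Rightarrow> ('p \<Rightarrow> 'q::order) \<Rightarrow> 'x \<Rightarrow> 'q option" where
  "ext_map e f x = (if \<exists>m. is_meet (f ` (e -` {x..})) m
                     then Some (THE m. is_meet (f ` (e -` {x..})) m) else None)"

definition order_preserving_on :: "'x::order set \<Rightarrow> ('x \<Rightarrow> 'q::order option) \<Rightarrow> bool" where
  "order_preserving_on D g \<longleftrightarrow> (\<forall>x\<in>D. \<forall>y\<in>D. x \<le> y \<longrightarrow> the (g x) \<le> the (g y))"

definition meet_preserving :: "'c rel \<Rightarrow> ('x::order \<Rightarrow> 'q::order option) \<Rightarrow> bool" where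
  "meet_preserving r g \<longleftrightarrow> (\<forall>Z b. Z \<subseteq> dom g \<and> ordLess2 (card_of Z) r \<and> is_meet_in Z (dom g) b \<longrightarrow>
      is_meet ((the \<circ> g) ` Z) (the (g b)))"

end

theory Submission imports Defs begin

text \<open>Write \<open>F x = f[e\<^sup>-\<^sup>1(x\<^sup>\<up>)]\<close>, so that \<open>f\<^sub>X x = \<Sqinter>F x\<close>. As \<open>F\<close> is antitone,
  \<open>f\<^sub>X\<close> is monotone, and \<open>F (e p)\<close> has least element \<open>f p\<close>. Part (2) rests on a squeeze:
  if \<open>f\<^sub>X y = \<Sqinter>f[S]\<close> and \<open>y \<le> x \<le> e[S]\<close>, then \<open>f[S] \<subseteq> F x \<subseteq> F y\<close>, hence also
  \<open>f\<^sub>X x = \<Sqinter>f[S]\<close>. Continuity provides such a \<open>y\<close> below \<open>e[S]\<close> for every small \<open>S\<close>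
  with \<open>f[S]\<close> bounded below, and by regularity of \<open>\<alpha>\<close> a small \<open>Z \<subseteq> X\<close> can be traded
  for a small \<open>S \<subseteq> P\<close> (a union of supports) with the same lower bounds. Squeezing at
  \<open>\<Sqinter>Z\<close> gives (a), squeezing at the relative meet \<open>b\<close> gives (b); for (c), every
  \<open>\<alpha>\<close>-meet-preserving \<open>g\<close> sends the supported element \<open>x = \<Sqinter>e[S]\<close> to \<open>\<Sqinter>f[S]\<close>.\<close>

lemma is_meetI: "(\<And>s. s \<in> S \<Longrightarrow> m \<le> s) \<Longrightarrow> (\<And>l. \<forall>s\<in>S. l \<le> s \<Longrightarrow> l \<le> m) \<Longrightarrow> is_meet S m"
  unfolding is_meet_in_def by auto

lemma is_meet_lower: "is_meet S m \<Longrightarrow> s \<in> S \<Longrightarrow> m \<le> s"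
  unfolding is_meet_in_def by auto

lemma is_meet_greatest: "is_meet S m \<Longrightarrow> \<forall>s\<in>S. l \<le> s \<Longrightarrow> l \<le> m"
  unfolding is_meet_in_def by auto

lemma is_meet_unique: "is_meet S a \<Longrightarrow> is_meet S b \<Longrightarrow> a = (b::'a::order)"
  by (meson is_meet_greatest is_meet_lower order_antisym)

lemma ext_map_eq_Some_iff: "ext_map e f x = Some m \<longleftrightarrow> is_meet (f ` (e -` {x..})) m"
  unfolding ext_map_def using is_meet_unique by (auto intro: theI)

lemma ext_map_the_is_meet:
  "x \<in> dom (ext_map e f) \<Longrightarrow> is_meet (f ` (e -` {x..})) (the (ext_map e f x))"
  by (metis domD ext_map_eq_Some_iff option.sel)

lemma ext_map_le: "x \<in> dom (ext_map e f) \<Longrightarrow> x \<le> e p \<Longrightarrow> the (ext_map e f x) \<le> f p"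
  by (rule is_meet_lower[OF ext_map_the_is_meet]) auto

lemma ext_map_greatest:
  "x \<in> dom (ext_map e f) \<Longrightarrow> (\<And>p. x \<le> e p \<Longrightarrow> l \<le> f p) \<Longrightarrow> l \<le> the (ext_map e f x)"
  by (rule is_meet_greatest[OF ext_map_the_is_meet]) auto

lemma ext_map_mono:
  assumes "x \<in> dom (ext_map e f)" "y \<in> dom (ext_map e f)" "x \<le> y"
  shows "the (ext_map e f x) \<le> the (ext_map e f y)"
  using assms(2)
proof (rule ext_map_greatest)
  fix p
  assume "y \<le> e p"
  with assms(3) have "x \<le> e p" by (rule order_trans)
  with assms(1) show "the (ext_map e f x) \<le> f p" by (rule ext_map_le)
qed

lemma ext_map_order_preserving: "order_preserving_on (dom (ext_map e f)) (ext_map e f)"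
  unfolding order_preserving_on_def using ext_map_mono by blast

lemma ext_map_embedding:
  assumes "order_embedding e" "mono f"
  shows "ext_map e f (e p) = Some (f p)"
  unfolding ext_map_eq_Some_iff
proof (rule is_meetI)
  show "f p \<le> s" if "s \<in> f ` (e -` {e p..})" for s
    using that assms unfolding order_embedding_def mono_def by auto
qed auto

lemma ext_map_squeeze:
  assumes "ext_map e f y = Some q" "is_meet (f ` S) q" "y \<le> x" "\<forall>s\<in>S. x \<le> e s"
  shows "ext_map e f x = Some q"
  unfolding ext_map_eq_Some_iff
proof (rule is_meetI)
  show "q \<le> s" if "s \<in> f ` (e -` {x..})" for s
  proof -
    from that obtain p where "s = f p" "x \<le> e p" by auto
    with assms(1,3) show ?thesis by (auto simp: ext_map_eq_Some_iff intro: is_meet_lower)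
  qed
  show "l \<le> q" if "\<forall>s\<in>f ` (e -` {x..}). l \<le> s" for l
    using that assms(2,4) by (auto intro: is_meet_greatest)
qed

lemma continuous_wrtE:
  assumes "continuous_wrt r e f" "ordLess2 (card_of S) r" "\<forall>s\<in>S. q \<le> f s"
  obtains qS xS where "is_meet (f ` S) qS" "ext_map e f xS = Some qS" "\<forall>s\<in>S. xS \<le> e s"
proof -
  have "S \<subseteq> f -` {q..}" using assms(3) by auto
  then obtain qS xS where q: "is_meet (f ` S) qS" "is_meet (f ` (e -` {xS..})) qS"
      "up_set S \<subseteq> e -` {xS..}"
    using assms(1,2) unfolding continuous_wrt_def by blast
  show thesis
  proof (rule that)
    show "ext_map e f xS = Some qS" using q(2) by (simp add: ext_map_eq_Some_iff)
    show "\<forall>s\<in>S. xS \<le> e s" using q(3) by (auto simp: up_set_def)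
  qed (fact q(1))
qed

lemma supported_coverE:
  assumes "Cinfinite r" "regularCard r" "supported r e" "ordLess2 (card_of Z) r"
  obtains S where "ordLess2 (card_of S) r" "\<forall>s\<in>S. \<exists>z\<in>Z. z \<le> e s"
    "\<And>l. \<forall>s\<in>S. l \<le> e s \<Longrightarrow> \<forall>z\<in>Z. l \<le> z"
proof -
  from assms(3) obtain supp where supp: "\<And>z. ordLess2 (card_of (supp z)) r \<and> is_meet (e ` supp z) z"
    unfolding supported_def by metis
  show thesis
  proof (rule that[of "\<Union>z\<in>Z. supp z"])
    show "ordLess2 (card_of (\<Union>z\<in>Z. supp z)) r"
      using regularCard_UNION_bound[OF assms(1,2,4)] supp by blast
    show "\<forall>s\<in>\<Union>z\<in>Z. supp z. \<exists>z\<in>Z. z \<le> e s"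
      using supp is_meet_lower by fastforce
    show "\<forall>z\<in>Z. l \<le> z" if "\<forall>s\<in>\<Union>z\<in>Z. supp z. l \<le> e s" for l
      using that supp is_meet_greatest by fastforce
  qed
qed

lemma ext_map_below_small_setE:
  assumes "Cinfinite r" "regularCard r" "supported r e" "continuous_wrt r e f"
    and "ordLess2 (card_of Z) r" "b \<in> dom (ext_map e f)" "\<forall>z\<in>Z. b \<le> z"
  obtains S x q where "\<forall>s\<in>S. \<exists>z\<in>Z. z \<le> e s" "\<forall>z\<in>Z. x \<le> z"
    "is_meet (f ` S) q" "ext_map e f x = Some q"
proof -
  obtain S where S: "ordLess2 (card_of S) r" "\<forall>s\<in>S. \<exists>z\<in>Z. z \<le> e s"
      "\<And>l. \<forall>s\<in>S. l \<le> e s \<Longrightarrow> \<forall>z\<in>Z. l \<le> z"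
    using supported_coverE[OF assms(1-3,5)] by blast
  have "\<forall>s\<in>S. the (ext_map e f b) \<le> f s"
    using S(2) assms(6,7) order_trans by (metis ext_map_le)
  then obtain q x where "is_meet (f ` S) q" "ext_map e f x = Some q" "\<forall>s\<in>S. x \<le> e s"
    using continuous_wrtE[OF assms(4) S(1)] by blast
  with S(2,3) show thesis using that by blast
qed

lemma ext_map_relative_meet_is_meet:
  assumes "Cinfinite r" "regularCard r" "supported r e" "continuous_wrt r e f"
    and "ordLess2 (card_of Z) r" "is_meet Z m" "is_meet_in Z (dom (ext_map e f)) b"
  shows "is_meet Z b"
proof -
  have b: "b \<in> dom (ext_map e f)" "\<forall>z\<in>Z. b \<le> z"
    using assms(7) unfolding is_meet_in_def by auto
  obtain S x q where S: "\<forall>s\<in>S. \<exists>z\<in>Z. z \<le> e s" and x: "\<forall>z\<in>Z. x \<le> z"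
    and q: "is_meet (f ` S) q" "ext_map e f x = Some q"
    using ext_map_below_small_setE[OF assms(1-5) b] by blast
  have "x \<le> m" using assms(6) x by (rule is_meet_greatest)
  moreover have "\<forall>s\<in>S. m \<le> e s" using assms(6) S by (meson is_meet_lower order_trans)
  ultimately have "ext_map e f m = Some q" by (rule ext_map_squeeze[OF q(2,1)])
  then have "m \<le> b"
    using assms(6,7) unfolding is_meet_in_def by blast
  moreover have "b \<le> m" using b(2) assms(6) by (rule is_meet_greatest[rotated])
  ultimately show ?thesis using assms(6) by simp
qed

lemma ext_map_meet_preserving:
  assumes "Cinfinite r" "regularCard r" "supported r e" "continuous_wrt r e f"
  shows "meet_preserving r (ext_map e f)"
  unfolding meet_preserving_def
proof (intro allI impI, elim conjE)
  fix Z b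
  assume Z: "Z \<subseteq> dom (ext_map e f)" "ordLess2 (card_of Z) r"
    and b_meet: "is_meet_in Z (dom (ext_map e f)) b"
  have b: "b \<in> dom (ext_map e f)" "\<forall>z\<in>Z. b \<le> z"
    using b_meet unfolding is_meet_in_def by auto
  obtain S x q where S: "\<forall>s\<in>S. \<exists>z\<in>Z. z \<le> e s" and x: "\<forall>z\<in>Z. x \<le> z"
    and q: "is_meet (f ` S) q" "ext_map e f x = Some q"
    using ext_map_below_small_setE[OF assms Z(2) b] by blast
  have "x \<le> b" using b_meet x q(2) unfolding is_meet_in_def by blast
  moreover have "\<forall>s\<in>S. b \<le> e s" using S b(2) order_trans by blast
  ultimately have bq: "the (ext_map e f b) = q" using ext_map_squeeze[OF q(2,1)] by simp
  show "is_meet ((the \<circ> ext_map e f) ` Z) (the (ext_map e f b))"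
  proof (rule is_meetI)
    show "the (ext_map e f b) \<le> s" if "s \<in> (the \<circ> ext_map e f) ` Z" for s
      using that Z(1) b ext_map_mono by fastforce
    show "l \<le> the (ext_map e f b)" if l: "\<forall>s\<in>(the \<circ> ext_map e f) ` Z. l \<le> s" for l
    proof -
      have "\<forall>s\<in>S. l \<le> f s"
        using S l Z(1) ext_map_le order_trans by fastforce
      then show ?thesis unfolding bq using q(1) by (auto intro: is_meet_greatest)
    qed
  qed
qed

lemma meet_preserving_extension_eq_ext_map:
  assumes "supported r e" "continuous_wrt r e f"
    and "meet_preserving r g" "\<forall>p. g (e p) = Some (f p)" "x \<in> dom g"
  shows "g x = ext_map e f x"
proof -
  from assms(1) obtain S where S: "ordLess2 (card_of S) r" "is_meet (e ` S) x"
    unfolding supported_def by blast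
  have "e ` S \<subseteq> dom g" using assms(4) by auto
  moreover have "ordLess2 (card_of (e ` S)) r"
    using ordLeq_ordLess_trans[OF card_of_image S(1)] .
  moreover have "is_meet_in (e ` S) (dom g) x"
    using S(2) assms(5) unfolding is_meet_in_def by blast
  ultimately have "is_meet ((the \<circ> g) ` e ` S) (the (g x))"
    using assms(3) unfolding meet_preserving_def by blast
  moreover have "(the \<circ> g) ` e ` S = f ` S" using assms(4) by (simp add: image_image)
  ultimately have gx: "is_meet (f ` S) (the (g x))" by simp
  then obtain q y where q: "is_meet (f ` S) q" "ext_map e f y = Some q" "\<forall>s\<in>S. y \<le> e s"
    using continuous_wrtE[OF assms(2) S(1)] is_meet_lower by blast
  have "ext_map e f x = Some q"
    using ext_map_squeeze[OF q(2,1)] S(2) q(3) by (auto intro: is_meet_greatest is_meet_lower)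
  moreover have "g x = Some q" using is_meet_unique[OF gx q(1)] assms(5) by force
  ultimately show ?thesis by simp
qed

theorem proposition7p4:
  fixes r :: "'c rel"
    and e :: "'p::order \<Rightarrow> 'x::order"
    and f :: "'p \<Rightarrow> 'q::order"
  assumes reg: "Cinfinite r" "regularCard r"
    and ext: "meet_extension e"
    and supp: "supported r e"
    and mono_f: "mono f"
  shows "order_preserving_on (dom (ext_map e f)) (ext_map e f)
         \<and> range e \<subseteq> dom (ext_map e f)
         \<and> (\<forall>p. ext_map e f (e p) = Some (f p))
         \<and> (continuous_wrt r e f \<longrightarrow>
           (\<forall>Z b. Z \<subseteq> dom (ext_map e f) \<and> ordLess2 (card_of Z) r \<and> (\<exists>m. is_meet Z m)
                  \<and> is_meet_in Z (dom (ext_map e f)) b \<longrightarrow> is_meet Z b)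
         \<and> meet_preserving r (ext_map e f)
         \<and> (\<forall>g :: 'x \<Rightarrow> 'q option. range e \<subseteq> dom g \<and> meet_preserving r g
                \<and> (\<forall>p. g (e p) = Some (f p)) \<longrightarrow>
                (\<forall>x \<in> dom (ext_map e f) \<inter> dom g. g x = ext_map e f x)))"
proof -
  have on_e: "\<forall>p. ext_map e f (e p) = Some (f p)"
    using ext mono_f ext_map_embedding unfolding meet_extension_def by blast
  then show ?thesis
    by (intro conjI impI allI ballI; (elim conjE exE IntE)?)
      (auto intro: ext_map_order_preserving ext_map_relative_meet_is_meet[OF reg supp]
        ext_map_meet_preserving[OF reg supp] meet_preserving_extension_eq_ext_map[OF supp])
qed

end
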